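(* For $\omega>0$ small and any $h$ in the Schwartz space $\mathcal{S}(\mathbb{R})$, \[ \int(2yh'+h)Kh=4\int(h'')^2+4\int(h')^2+\int Y_1(h')^2+\int Y_0h^2, \] where $Y_1=-2K_2-yK_2'+2yK_1$ and $Y_0=\tfrac12(K_2''-K_1'-2yK_0')$, and these satisfy $|\partial_y^kY_1|+|\partial_y^kY_0|\lesssim\omega e^{-|y|}$ on $\mathbb{R}$ for all $k\ge0$.
   Context: Let $Q_\omega(y)=\sqrt{4/(1+a_\omega\cosh 2y)}$, $a_\omega=\sqrt{1+\tfrac{16}{3}\omega}$, $M_+=-\partial_y^2+1+\tfrac{\omega}{3}Q_\omega^4$, $M_-=-\partial_y^2+1-\omega Q_\omega^4$. For small $\omega>0$, $\alpha=\alpha(\omega)>0$ is smooth with $\alpha=\tfrac89\omega+O(\omega^2)$, $\lambda=1-\alpha^2$, $\kappa=\sqrt{2-\alpha^2}$, and $W_1,W_2$ are smooth real functions, even in $y$, with $M_+W_1=\lambda W_2$, $M_-W_2=\lambda W_1$, and for $j=1,2$, $k\ge0$: $|\partial_y^kW_j|\lesssim\omega^ke^{-\alpha|y|}+\omega e^{-|y|}$, $|\partial_y^k(W_1-W_2)|\lesssim\omega e^{-\kappa|y|}$, $|W_j-e^{-\alpha|y|}|\lesssim\omega e^{-\alpha|y|}$. With $U=\partial_y-W_2'/W_2$, the operator $K=\partial_y^4-2\partial_y^2+K_2\partial_y^2+K_1\partial_y+K_0+1$ is the fourth-order differential operator (with smooth coefficients $K_2,K_1,K_0$ uniquely determined)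 satisfying $UM_+M_-=KU$; its coefficients satisfy $|\partial_y^kK_i|\lesssim\omega e^{-(\kappa-\alpha)|y|}$. $\lesssim$ means $\le C\,\cdot$ with $C$ independent of $\omega,y$. *)

theory Defs
  imports "HOL-Analysis.Analysis"
begin

definition nderiv :: "nat \<Rightarrow> (real \<Rightarrow> real) \<Rightarrow> real \<Rightarrow> real" where
  "nderiv k f = (deriv ^^ k) f"

definition smooth_fun :: "(real \<Rightarrow> real) \<Rightarrow> bool" where
  "smooth_fun f \<longleftrightarrow> (\<forall>k x. nderiv k f differentiable (at x))"

definition schwartz :: "(real \<Rightarrow> real) \<Rightarrow> bool" where
  "schwartz h \<longleftrightarrow> smooth_fun h \<and>
     (\<forall>j k. \<exists>C. \<forall>y. \<bar>y\<bar> ^ j * \<bar>nderiv k h y\<bar> \<le> C)"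

definition a_om :: "real \<Rightarrow> real" where
  "a_om \<omega> = sqrt (1 + 16/3 * \<omega>)"

definition Q_om :: "real \<Rightarrow> real \<Rightarrow> real" where
  "Q_om \<omega> y = sqrt (4 / (1 + a_om \<omega> * cosh (2 * y)))"

definition M_plus :: "real \<Rightarrow> (real \<Rightarrow> real) \<Rightarrow> real \<Rightarrow> real" where
  "M_plus \<omega> f y = - nderiv 2 f y + f y + \<omega> / 3 * (Q_om \<omega> y) ^ 4 * f y"

definition M_minus :: "real \<Rightarrow> (real \<Rightarrow> real) \<Rightarrow> real \<Rightarrow> real" where
  "M_minus \<omega> f y = - nderiv 2 f y + f y - \<omega> * (Q_om \<omega> y) ^ 4 * f y"

definition U_op :: "(real \<Rightarrow> real) \<Rightarrow> (real \<Rightarrow> real) \<Rightarrow> real \<Rightarrow> real" where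
  "U_op W2 f y = deriv f y - deriv W2 y / W2 y * f y"

definition K_op :: "(real \<Rightarrow> real) \<Rightarrow> (real \<Rightarrow> real) \<Rightarrow> (real \<Rightarrow> real)
                     \<Rightarrow> (real \<Rightarrow> real) \<Rightarrow> real \<Rightarrow> real" where
  "K_op K2 K1 K0 f y = nderiv 4 f y - 2 * nderiv 2 f y + K2 y * nderiv 2 f y
      + K1 y * deriv f y + K0 y * f y + f y"

end

(*
  The identity is an integration by parts: the difference of its two integrands is the derivative
  of energy_flux, a quadratic expression in h, h', h'', h''' whose coefficients grow at most
  polynomially.  Since h is a Schwartz function, energy_flux vanishes at infinity and every
  integrand is integrable, so the difference integrates to zero.

  For the bounds, Leibniz' rule writes the k-th derivatives of Y1 and Y0 through the derivatives
  of K_i and y times the derivatives of K_i, which are O(omega (1 + |y|) exp (-(kappa - alpha) |y|)).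
  Because alpha = O(omega), for small omega one has kappa - alpha >= 5/4 > 1, and
  (1 + |y|) exp (-t |y|) <= t / (t - 1) exp (-|y|) for t > 1.
*)
theory Submission
  imports Defs "HOL-Probability.Sinc_Integral" "HOL-Real_Asymp.Real_Asymp"
begin

lemma nderiv_0 [simp]: "nderiv 0 f = f"
  by (simp add: nderiv_def)

lemma nderiv_Suc: "nderiv (Suc k) f = deriv (nderiv k f)"
  by (simp add: nderiv_def)

lemma has_real_derivative_nderiv:
  "smooth_fun f \<Longrightarrow> (nderiv k f has_real_derivative nderiv (Suc k) f x) (at x)"
  unfolding smooth_fun_def nderiv_Suc by (simp add: DERIV_deriv_iff_real_differentiable)

lemma has_real_derivative_smooth_fun:
  "smooth_fun f \<Longrightarrow> (f has_real_derivative nderiv 1 f x) (at x)"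
  using has_real_derivative_nderiv[of f 0] by simp

lemma DERIV_nderiv [derivative_intros]:
  assumes "smooth_fun f" "(g has_real_derivative g') (at x within s)"
  shows "((\<lambda>y. nderiv k f (g y)) has_real_derivative nderiv (Suc k) f (g x) * g') (at x within s)"
  using DERIV_chain2[OF has_real_derivative_nderiv[OF assms(1)] assms(2)] by simp

lemma continuous_on_nderiv: "smooth_fun f \<Longrightarrow> continuous_on UNIV (nderiv k f)"
  unfolding smooth_fun_def
  by (meson continuous_at_imp_continuous_on differentiable_imp_continuous_within)

lemma nderiv_eqI:
  assumes "g 0 = f" "\<And>k x. (g k has_real_derivative g (Suc k) x) (at x)"
  shows "nderiv k f = g k"
proof (induction k)
  case 0
  show ?case
    using assms(1) by simp
next
  case (Suc k)
  show ?case
    unfolding nderiv_Suc Suc using assms(2) DERIV_imp_deriv by (intro ext) blast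
qed

section \<open>Rapidly decreasing and polynomially bounded functions\<close>

definition rapidly_decreasing :: "(real \<Rightarrow> real) \<Rightarrow> bool" where
  "rapidly_decreasing f \<longleftrightarrow> continuous_on UNIV f \<and> (\<forall>n. \<exists>C. \<forall>y. (1 + \<bar>y\<bar>) ^ n * \<bar>f y\<bar> \<le> C)"

definition polynomially_bounded :: "(real \<Rightarrow> real) \<Rightarrow> bool" where
  "polynomially_bounded f \<longleftrightarrow> continuous_on UNIV f \<and> (\<exists>B n. \<forall>y. \<bar>f y\<bar> \<le> B * (1 + \<bar>y\<bar>) ^ n)"

lemma one_plus_abs_power_le: "(1 + \<bar>y::real\<bar>) ^ n \<le> 2 ^ n * (1 + \<bar>y\<bar> ^ n)"
proof (cases "\<bar>y\<bar> \<le> 1")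
  case True
  have "(1 + \<bar>y\<bar>) ^ n \<le> 2 ^ n"
    using True by (intro power_mono) auto
  also have "\<dots> \<le> 2 ^ n * (1 + \<bar>y\<bar> ^ n)"
    by simp
  finally show ?thesis .
next
  case False
  have "(1 + \<bar>y\<bar>) ^ n \<le> (2 * \<bar>y\<bar>) ^ n"
    using False by (intro power_mono) auto
  also have "\<dots> \<le> 2 ^ n * (1 + \<bar>y\<bar> ^ n)"
    by (simp add: power_mult_distrib)
  finally show ?thesis .
qed

lemma schwartz_rapidly_decreasing:
  assumes "schwartz h"
  shows "rapidly_decreasing (nderiv k h)"
  unfolding rapidly_decreasing_def
proof (intro conjI allI)
  show "continuous_on UNIV (nderiv k h)"
    using assms continuous_on_nderiv schwartz_def by blast
  fix n
  obtain C0 Cn where C0: "\<And>y. \<bar>y\<bar> ^ 0 * \<bar>nderiv k h y\<bar> \<le> C0"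
    and Cn: "\<And>y. \<bar>y\<bar> ^ n * \<bar>nderiv k h y\<bar> \<le> Cn"
    using assms unfolding schwartz_def by meson
  have "(1 + \<bar>y\<bar>) ^ n * \<bar>nderiv k h y\<bar> \<le> 2 ^ n * (C0 + Cn)" for y
  proof -
    have "(1 + \<bar>y\<bar>) ^ n * \<bar>nderiv k h y\<bar> \<le> 2 ^ n * (1 + \<bar>y\<bar> ^ n) * \<bar>nderiv k h y\<bar>"
      by (intro mult_right_mono one_plus_abs_power_le) auto
    also have "\<dots> = 2 ^ n * (\<bar>y\<bar> ^ 0 * \<bar>nderiv k h y\<bar> + \<bar>y\<bar> ^ n * \<bar>nderiv k h y\<bar>)"
      by (simp add: algebra_simps)
    also have "\<dots> \<le> 2 ^ n * (C0 + Cn)"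
      using C0[of y] Cn[of y] by (intro mult_left_mono) auto
    finally show ?thesis .
  qed
  then show "\<exists>C. \<forall>y. (1 + \<bar>y\<bar>) ^ n * \<bar>nderiv k h y\<bar> \<le> C"
    by blast
qed

lemma rapidly_decreasing_imp_polynomially_bounded:
  "rapidly_decreasing f \<Longrightarrow> polynomially_bounded f"
  unfolding rapidly_decreasing_def polynomially_bounded_def
  by (metis power_0 mult_1 mult.commute)

lemma polynomially_boundedI:
  assumes "continuous_on UNIV f" "\<And>y. \<bar>f y\<bar> \<le> B"
  shows "polynomially_bounded f"
  unfolding polynomially_bounded_def using assms
  by (intro conjI exI[of _ B] exI[of _ 0]) auto

lemma polynomially_bounded_const: "polynomially_bounded (\<lambda>y. c)"
  by (rule polynomially_boundedI[of _ "\<bar>c\<bar>"]) auto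

lemma polynomially_bounded_ident: "polynomially_bounded (\<lambda>y. y)"
  unfolding polynomially_bounded_def
  by (intro conjI continuous_intros exI[of _ 1] exI[of _ 1]) auto

lemma polynomially_bounded_mult:
  assumes "polynomially_bounded f" "polynomially_bounded g"
  shows "polynomially_bounded (\<lambda>y. f y * g y)"
proof -
  obtain B n B' m where B: "\<And>y. \<bar>f y\<bar> \<le> B * (1 + \<bar>y\<bar>) ^ n"
    and B': "\<And>y. \<bar>g y\<bar> \<le> B' * (1 + \<bar>y\<bar>) ^ m"
    using assms unfolding polynomially_bounded_def by meson
  have "\<bar>f y * g y\<bar> \<le> (B * B') * (1 + \<bar>y\<bar>) ^ (n + m)" for y
  proof -
    have "\<bar>f y * g y\<bar> \<le> (B * (1 + \<bar>y\<bar>) ^ n) * (B' * (1 + \<bar>y\<bar>) ^ m)"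
      unfolding abs_mult using B[of y] B'[of y] by (intro mult_mono) auto
    then show ?thesis
      by (simp add: power_add algebra_simps)
  qed
  moreover have "continuous_on UNIV (\<lambda>y. f y * g y)"
    using assms unfolding polynomially_bounded_def by (intro continuous_intros) auto
  ultimately show ?thesis
    unfolding polynomially_bounded_def by blast
qed

lemma polynomially_bounded_add:
  assumes "polynomially_bounded f" "polynomially_bounded g"
  shows "polynomially_bounded (\<lambda>y. f y + g y)"
proof -
  obtain B n B' m where B: "\<And>y. \<bar>f y\<bar> \<le> B * (1 + \<bar>y\<bar>) ^ n"
    and B': "\<And>y. \<bar>g y\<bar> \<le> B' * (1 + \<bar>y\<bar>) ^ m"
    using assms unfolding polynomially_bounded_def by meson
  have "\<bar>f y + g y\<bar> \<le> (\<bar>B\<bar> + \<bar>B'\<bar>) * (1 + \<bar>y\<bar>) ^ (n + m)" for y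
  proof -
    have le: "\<bar>c\<bar> \<le> C * (1 + \<bar>y\<bar>) ^ j \<Longrightarrow> j \<le> n + m \<Longrightarrow>
        \<bar>c\<bar> \<le> \<bar>C\<bar> * (1 + \<bar>y\<bar>) ^ (n + m)" for c C j
    proof (erule order_trans)
      assume "j \<le> n + m"
      then show "C * (1 + \<bar>y\<bar>) ^ j \<le> \<bar>C\<bar> * (1 + \<bar>y\<bar>) ^ (n + m)"
        by (intro mult_mono power_increasing) auto
    qed
    have "\<bar>f y\<bar> \<le> \<bar>B\<bar> * (1 + \<bar>y\<bar>) ^ (n + m)" "\<bar>g y\<bar> \<le> \<bar>B'\<bar> * (1 + \<bar>y\<bar>) ^ (n + m)"
      using le[OF B] le[OF B'] by auto
    then show ?thesis
      unfolding distrib_right using abs_triangle_ineq[of "f y" "g y"] by linarith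
  qed
  moreover have "continuous_on UNIV (\<lambda>y. f y + g y)"
    using assms unfolding polynomially_bounded_def by (intro continuous_intros) auto
  ultimately show ?thesis
    unfolding polynomially_bounded_def by blast
qed

lemma polynomially_bounded_minus:
  "polynomially_bounded f \<Longrightarrow> polynomially_bounded (\<lambda>y. - f y)"
  using polynomially_bounded_mult[OF polynomially_bounded_const[of "-1"]] by simp

lemma polynomially_bounded_diff:
  "polynomially_bounded f \<Longrightarrow> polynomially_bounded g \<Longrightarrow> polynomially_bounded (\<lambda>y. f y - g y)"
  using polynomially_bounded_add[OF _ polynomially_bounded_minus, of f g] by simp

lemma polynomially_bounded_divide:
  "polynomially_bounded f \<Longrightarrow> polynomially_bounded (\<lambda>y. f y / c)"
  using polynomially_bounded_mult[OF _ polynomially_bounded_const[of "inverse c"], of f]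
  by (simp add: divide_inverse)

lemmas polynomially_bounded_intros =
  polynomially_bounded_const polynomially_bounded_ident polynomially_bounded_mult
  polynomially_bounded_add polynomially_bounded_minus polynomially_bounded_diff
  polynomially_bounded_divide

lemma rapidly_decreasing_mult:
  assumes "polynomially_bounded g" "rapidly_decreasing f"
  shows "rapidly_decreasing (\<lambda>y. g y * f y)"
  unfolding rapidly_decreasing_def
proof (intro conjI allI)
  show "continuous_on UNIV (\<lambda>y. g y * f y)"
    using assms unfolding polynomially_bounded_def rapidly_decreasing_def
    by (intro continuous_intros) auto
  fix k
  obtain B n where B: "\<And>y. \<bar>g y\<bar> \<le> B * (1 + \<bar>y\<bar>) ^ n"
    using assms unfolding polynomially_bounded_def by blast
  obtain C where C: "\<And>y. (1 + \<bar>y\<bar>) ^ (k + n) * \<bar>f y\<bar> \<le> C"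
    using assms unfolding rapidly_decreasing_def by blast
  have "(1 + \<bar>y\<bar>) ^ k * \<bar>g y * f y\<bar> \<le> \<bar>B\<bar> * C" for y
  proof -
    have "(1 + \<bar>y\<bar>) ^ k * \<bar>g y * f y\<bar> = \<bar>g y\<bar> * ((1 + \<bar>y\<bar>) ^ k * \<bar>f y\<bar>)"
      by (simp add: abs_mult)
    also have "\<dots> \<le> (\<bar>B\<bar> * (1 + \<bar>y\<bar>) ^ n) * ((1 + \<bar>y\<bar>) ^ k * \<bar>f y\<bar>)"
      using B[of y] by (intro mult_right_mono) (auto intro: order_trans abs_ge_self)
    also have "\<dots> = \<bar>B\<bar> * ((1 + \<bar>y\<bar>) ^ (k + n) * \<bar>f y\<bar>)"
      by (simp add: power_add algebra_simps)
    also have "\<dots> \<le> \<bar>B\<bar> * C"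
      using C[of y] by (intro mult_left_mono) auto
    finally show ?thesis .
  qed
  then show "\<exists>C. \<forall>y. (1 + \<bar>y\<bar>) ^ k * \<bar>g y * f y\<bar> \<le> C"
    by blast
qed

lemma rapidly_decreasing_add:
  assumes "rapidly_decreasing f" "rapidly_decreasing g"
  shows "rapidly_decreasing (\<lambda>y. f y + g y)"
  unfolding rapidly_decreasing_def
proof (intro conjI allI)
  show "continuous_on UNIV (\<lambda>y. f y + g y)"
    using assms unfolding rapidly_decreasing_def by (intro continuous_intros) auto
  fix k
  obtain C D where C: "\<And>y. (1 + \<bar>y\<bar>) ^ k * \<bar>f y\<bar> \<le> C"
    and D: "\<And>y. (1 + \<bar>y\<bar>) ^ k * \<bar>g y\<bar> \<le> D"
    using assms unfolding rapidly_decreasing_def by meson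
  have "(1 + \<bar>y\<bar>) ^ k * \<bar>f y + g y\<bar> \<le> C + D" for y
  proof -
    have "(1 + \<bar>y\<bar>) ^ k * \<bar>f y + g y\<bar> \<le> (1 + \<bar>y\<bar>) ^ k * (\<bar>f y\<bar> + \<bar>g y\<bar>)"
      by (intro mult_left_mono) auto
    then show ?thesis
      using C[of y] D[of y] by (simp add: algebra_simps)
  qed
  then show "\<exists>C. \<forall>y. (1 + \<bar>y\<bar>) ^ k * \<bar>f y + g y\<bar> \<le> C"
    by blast
qed

lemma rapidly_decreasing_diff:
  assumes "rapidly_decreasing f" "rapidly_decreasing g"
  shows "rapidly_decreasing (\<lambda>y. f y - g y)"
  using rapidly_decreasing_add[OF assms(1) rapidly_decreasing_mult[OF polynomially_bounded_const assms(2)], of "-1"]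
  by simp

lemma rapidly_decreasing_integrable:
  assumes "rapidly_decreasing f"
  shows "integrable lborel f"
proof -
  obtain C where C: "\<And>y. (1 + \<bar>y\<bar>) ^ 2 * \<bar>f y\<bar> \<le> C"
    using assms unfolding rapidly_decreasing_def by blast
  have "integrable lborel (\<lambda>x::real. inverse (1 + x\<^sup>2))"
    using integrable_inverse_1_plus_square unfolding set_integrable_def einterval_eq_UNIV
    by (simp add: indicator_def cong del: if_weak_cong)
  then show ?thesis
  proof (rule Bochner_Integration.integrable_bound[OF integrable_mult_right])
    show "f \<in> borel_measurable lborel"
      using assms unfolding rapidly_decreasing_def by (simp add: borel_measurable_continuous_onI)
    have "\<bar>f x\<bar> \<le> \<bar>C * inverse (1 + x\<^sup>2)\<bar>" for x :: real
    proof (rule order_trans[OF _ abs_ge_self])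
      have "(1 + x\<^sup>2) * \<bar>f x\<bar> \<le> (1 + \<bar>x\<bar>) ^ 2 * \<bar>f x\<bar>"
        by (intro mult_right_mono) (auto simp: power2_eq_square algebra_simps)
      also have "\<dots> \<le> C"
        by (rule C)
      finally show "\<bar>f x\<bar> \<le> C * inverse (1 + x\<^sup>2)"
        by (simp add: field_simps add_pos_nonneg)
    qed
    then show "AE x in lborel. norm (f x) \<le> norm (C * inverse (1 + x\<^sup>2))"
      by simp
  qed
qed

lemma rapidly_decreasing_tendsto_0:
  assumes "rapidly_decreasing f"
  shows "(f \<longlongrightarrow> 0) at_top" "(f \<longlongrightarrow> 0) at_bot"
proof -
  obtain C where C: "\<And>y. (1 + \<bar>y\<bar>) ^ 1 * \<bar>f y\<bar> \<le> C"
    using assms unfolding rapidly_decreasing_def by blast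
  have bound: "\<forall>\<^sub>F y in F. norm (f y) \<le> C / (1 + \<bar>y\<bar>)" for F
    using C by (intro always_eventually allI) (simp add: field_simps)
  have "((\<lambda>y. C / (1 + \<bar>y\<bar>)) \<longlongrightarrow> 0) at_top"
    by real_asymp
  with bound show "(f \<longlongrightarrow> 0) at_top"
    by (rule Lim_null_comparison)
  have "((\<lambda>y. C / (1 + \<bar>y\<bar>)) \<longlongrightarrow> 0) at_bot"
    by real_asymp
  with bound show "(f \<longlongrightarrow> 0) at_bot"
    by (rule Lim_null_comparison)
qed

lemma integral_deriv_eq_0:
  assumes "\<And>x. (F has_real_derivative f x) (at x)" "rapidly_decreasing f" "rapidly_decreasing F"
  shows "integral\<^sup>L lborel f = 0"
proof -
  have "(LBINT x=-\<infinity>..\<infinity>. f x) = 0 - 0"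
  proof (rule interval_integral_FTC_integrable)
    show "(F has_vector_derivative f x) (at x)" for x
      using assms(1) by (simp add: has_real_derivative_iff_has_vector_derivative)
    show "isCont f x" for x
      using assms(2) unfolding rapidly_decreasing_def by (simp add: continuous_on_eq_continuous_at)
    show "set_integrable lborel (einterval (- \<infinity>) \<infinity>) f"
      using rapidly_decreasing_integrable[OF assms(2)] by (simp add: set_integrable_def)
    show "((F \<circ> real_of_ereal) \<longlongrightarrow> 0) (at_right (- \<infinity>))"
      using rapidly_decreasing_tendsto_0(2)[OF assms(3)] by (simp add: ereal_tendsto_simps)
    show "((F \<circ> real_of_ereal) \<longlongrightarrow> 0) (at_left \<infinity>)"
      using rapidly_decreasing_tendsto_0(1)[OF assms(3)] by (simp add: ereal_tendsto_simps)
  qed simp_all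
  then show ?thesis
    by (simp add: interval_lebesgue_integral_def set_lebesgue_integral_def)
qed

section \<open>The energy identity\<close>

definition Y1_coeff :: "(real \<Rightarrow> real) \<Rightarrow> (real \<Rightarrow> real) \<Rightarrow> real \<Rightarrow> real" where
  "Y1_coeff K2 K1 y = - 2 * K2 y - y * deriv K2 y + 2 * y * K1 y"

definition Y0_coeff :: "(real \<Rightarrow> real) \<Rightarrow> (real \<Rightarrow> real) \<Rightarrow> (real \<Rightarrow> real) \<Rightarrow> real \<Rightarrow> real" where
  "Y0_coeff K2 K1 K0 y = (nderiv 2 K2 y - deriv K1 y - 2 * y * deriv K0 y) / 2"

definition energy_flux ::
    "(real \<Rightarrow> real) \<Rightarrow> (real \<Rightarrow> real) \<Rightarrow> (real \<Rightarrow> real) \<Rightarrow> (real \<Rightarrow> real) \<Rightarrow> real \<Rightarrow> real" where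
  "energy_flux h K2 K1 K0 y =
     nderiv 0 h y * nderiv 3 h y
     - 3 * (nderiv 1 h y * nderiv 2 h y)
     + 2 * y * (nderiv 1 h y * nderiv 3 h y)
     - y * (nderiv 2 h y * nderiv 2 h y)
     + (K2 y - 2) * (nderiv 0 h y * nderiv 1 h y)
     + (y * K2 y - 2 * y) * (nderiv 1 h y * nderiv 1 h y)
     + ((K1 y - nderiv 1 K2 y) / 2 + y * K0 y + y) * (nderiv 0 h y * nderiv 0 h y)"

lemma has_real_derivative_energy_flux:
  assumes "smooth_fun h" "smooth_fun K2" "smooth_fun K1" "smooth_fun K0"
  shows "(energy_flux h K2 K1 K0 has_real_derivative
      (2 * y * deriv h y + h y) * K_op K2 K1 K0 h y
      - (4 * (nderiv 2 h y)\<^sup>2 + 4 * (deriv h y)\<^sup>2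
         + Y1_coeff K2 K1 y * (deriv h y)\<^sup>2 + Y0_coeff K2 K1 K0 y * (h y)\<^sup>2)) (at y)"
proof -
  have "(energy_flux h K2 K1 K0 has_real_derivative
      (2 * y * nderiv 1 h y + h y) * (nderiv 4 h y - 2 * nderiv 2 h y + K2 y * nderiv 2 h y
         + K1 y * nderiv 1 h y + K0 y * h y + h y)
      - (4 * (nderiv 2 h y)\<^sup>2 + 4 * (nderiv 1 h y)\<^sup>2
         + (- 2 * K2 y - y * nderiv 1 K2 y + 2 * y * K1 y) * (nderiv 1 h y)\<^sup>2
         + (nderiv 2 K2 y - nderiv 1 K1 y - 2 * y * nderiv 1 K0 y) / 2 * (h y)\<^sup>2)) (at y)"
    unfolding energy_flux_def [abs_def]
    apply (rule derivative_eq_intros has_real_derivative_smooth_fun assms numeral_neq_zero refl)+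
    apply (simp add: numeral_eq_Suc power2_eq_square algebra_simps)
    apply (simp add: field_simps)
    done
  then show ?thesis
    by (simp add: K_op_def Y1_coeff_def Y0_coeff_def nderiv_Suc)
qed

lemma rapidly_decreasing_nderiv_product:
  assumes "schwartz h" "polynomially_bounded g"
  shows "rapidly_decreasing (\<lambda>y. g y * (nderiv i h y * nderiv j h y))"
proof -
  have "rapidly_decreasing (nderiv i h)" "rapidly_decreasing (nderiv j h)"
    using assms(1) by (rule schwartz_rapidly_decreasing)+
  then have "rapidly_decreasing (\<lambda>y. nderiv i h y * nderiv j h y)"
    by (intro rapidly_decreasing_mult rapidly_decreasing_imp_polynomially_bounded)
  with assms(2) show ?thesis
    by (rule rapidly_decreasing_mult)
qed

lemma rapidly_decreasing_energy_flux:
  assumes "schwartz h" "polynomially_bounded K2" "polynomially_bounded K1" "polynomially_bounded K0"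
    "polynomially_bounded (nderiv 1 K2)"
  shows "rapidly_decreasing (energy_flux h K2 K1 K0)"
proof -
  have product: "rapidly_decreasing (\<lambda>y. nderiv i h y * nderiv j h y)" for i j
    using rapidly_decreasing_nderiv_product[OF assms(1) polynomially_bounded_const, of 1] by simp
  show ?thesis
    unfolding energy_flux_def [abs_def] using assms
    by (intro rapidly_decreasing_add rapidly_decreasing_diff product
        rapidly_decreasing_nderiv_product polynomially_bounded_intros)
qed

lemma rapidly_decreasing_K_op:
  assumes "schwartz h" "polynomially_bounded K2" "polynomially_bounded K1" "polynomially_bounded K0"
  shows "rapidly_decreasing (K_op K2 K1 K0 h)"
proof -
  have "rapidly_decreasing (\<lambda>y. nderiv 4 h y - 2 * nderiv 2 h y + K2 y * nderiv 2 h y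
      + K1 y * nderiv 1 h y + K0 y * nderiv 0 h y + nderiv 0 h y)"
    using assms
    by (intro rapidly_decreasing_add rapidly_decreasing_diff rapidly_decreasing_mult
        schwartz_rapidly_decreasing polynomially_bounded_const)
  then show ?thesis
    by (simp add: K_op_def [abs_def] nderiv_Suc)
qed

lemma polynomially_bounded_Y_coeffs:
  assumes "\<And>k. polynomially_bounded (nderiv k K2)" "\<And>k. polynomially_bounded (nderiv k K1)"
    "\<And>k. polynomially_bounded (nderiv k K0)"
  shows "polynomially_bounded (Y1_coeff K2 K1)" "polynomially_bounded (Y0_coeff K2 K1 K0)"
proof -
  have "polynomially_bounded (\<lambda>y. - 2 * nderiv 0 K2 y - y * nderiv 1 K2 y + 2 * y * nderiv 0 K1 y)"
    "polynomially_bounded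
       (\<lambda>y. (nderiv 2 K2 y - nderiv 1 K1 y - 2 * y * nderiv 1 K0 y) / 2)"
    by (intro polynomially_bounded_intros assms)+
  then show "polynomially_bounded (Y1_coeff K2 K1)" "polynomially_bounded (Y0_coeff K2 K1 K0)"
    by (simp_all add: Y1_coeff_def [abs_def] Y0_coeff_def [abs_def] nderiv_Suc)
qed

lemma K_op_energy_identity:
  assumes h: "schwartz h"
    and smooth: "smooth_fun K2" "smooth_fun K1" "smooth_fun K0"
    and bounded: "\<And>k. polynomially_bounded (nderiv k K2)" "\<And>k. polynomially_bounded (nderiv k K1)"
      "\<And>k. polynomially_bounded (nderiv k K0)"
  shows "(\<integral>y. (2 * y * deriv h y + h y) * K_op K2 K1 K0 h y \<partial>lborel)
     = 4 * (\<integral>y. (nderiv 2 h y)\<^sup>2 \<partial>lborel) + 4 * (\<integral>y. (deriv h y)\<^sup>2 \<partial>lborel)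
       + (\<integral>y. Y1_coeff K2 K1 y * (deriv h y)\<^sup>2 \<partial>lborel)
       + (\<integral>y. Y0_coeff K2 K1 K0 y * (h y)\<^sup>2 \<partial>lborel)"
proof -
  have K: "polynomially_bounded K2" "polynomially_bounded K1" "polynomially_bounded K0"
    using bounded[of 0] by simp_all
  note Y = polynomially_bounded_Y_coeffs[OF bounded]
  have square: "rapidly_decreasing (\<lambda>y. g y * (nderiv i h y)\<^sup>2)" if "polynomially_bounded g" for g i
    using rapidly_decreasing_nderiv_product[OF h that, of i i] by (simp add: power2_eq_square)
  define L where "L y = (2 * y * deriv h y + h y) * K_op K2 K1 K0 h y" for y
  define R1 where "R1 y = 4 * (nderiv 2 h y)\<^sup>2" for y
  define R2 where "R2 y = 4 * (deriv h y)\<^sup>2" for y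
  define R3 where "R3 y = Y1_coeff K2 K1 y * (deriv h y)\<^sup>2" for y
  define R4 where "R4 y = Y0_coeff K2 K1 K0 y * (h y)\<^sup>2" for y
  have "polynomially_bounded (\<lambda>y. 2 * y * nderiv 1 h y + nderiv 0 h y)"
    by (intro polynomially_bounded_intros rapidly_decreasing_imp_polynomially_bounded
        schwartz_rapidly_decreasing h)
  from rapidly_decreasing_mult[OF this rapidly_decreasing_K_op[OF h K]] have L: "rapidly_decreasing L"
    by (simp add: L_def [abs_def] nderiv_Suc)
  have R: "rapidly_decreasing R1" "rapidly_decreasing R2" "rapidly_decreasing R3" "rapidly_decreasing R4"
    using square[OF polynomially_bounded_const, of 4 2] square[OF polynomially_bounded_const, of 4 1]
      square[OF Y(1), of 1] square[OF Y(2), of 0]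
    by (simp_all add: R1_def [abs_def] R2_def [abs_def] R3_def [abs_def] R4_def [abs_def] nderiv_Suc)
  have "integral\<^sup>L lborel (\<lambda>y. L y - (R1 y + R2 y + R3 y + R4 y)) = 0"
  proof (rule integral_deriv_eq_0[OF _ _ rapidly_decreasing_energy_flux[OF h K bounded(1)]])
    show "(energy_flux h K2 K1 K0 has_real_derivative L y - (R1 y + R2 y + R3 y + R4 y)) (at y)" for y
      unfolding L_def R1_def R2_def R3_def R4_def
      using h smooth by (intro has_real_derivative_energy_flux) (simp_all add: schwartz_def)
    show "rapidly_decreasing (\<lambda>y. L y - (R1 y + R2 y + R3 y + R4 y))"
      using L R by (intro rapidly_decreasing_diff rapidly_decreasing_add)
  qed
  then have "integral\<^sup>L lborel L
      = integral\<^sup>L lborel R1 + integral\<^sup>L lborel R2 + integral\<^sup>L lborel R3 + integral\<^sup>L lborel R4"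
    using L R by (simp add: rapidly_decreasing_integrable)
  then show ?thesis
    by (simp add: L_def [abs_def] R1_def [abs_def] R2_def [abs_def] R3_def [abs_def] R4_def [abs_def])
qed

section \<open>Exponential decay of the coefficients\<close>

lemma one_plus_abs_mult_exp_le:
  fixes t y :: real
  assumes "1 < t"
  shows "(1 + \<bar>y\<bar>) * exp (- t * \<bar>y\<bar>) \<le> t / (t - 1) * exp (- \<bar>y\<bar>)"
proof -
  define u where "u = (t - 1) * \<bar>y\<bar>"
  have "1 + u \<le> exp u"
    by (rule exp_ge_add_one_self)
  moreover have "1 \<le> exp u"
    using assms by (simp add: u_def)
  moreover have "t - 1 \<le> (t - 1) * exp u"
    using assms \<open>1 \<le> exp u\<close> by simp
  ultimately have "(t - 1) * (1 + \<bar>y\<bar>) \<le> t * exp u"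
    by (simp add: u_def algebra_simps)
  then have "1 + \<bar>y\<bar> \<le> t / (t - 1) * exp u"
    using assms by (simp add: field_simps)
  then have "(1 + \<bar>y\<bar>) * exp (- t * \<bar>y\<bar>) \<le> t / (t - 1) * exp u * exp (- t * \<bar>y\<bar>)"
    by (rule mult_right_mono) simp
  also have "\<dots> = t / (t - 1) * exp (- \<bar>y\<bar>)"
    by (simp add: u_def mult.assoc exp_add [symmetric] algebra_simps)
  finally show ?thesis .
qed

lemma sqrt_two_minus_square_minus_ge:
  fixes a :: real
  assumes "0 \<le> a" "a \<le> 1/10"
  shows "5/4 \<le> sqrt (2 - a\<^sup>2) - a"
proof -
  have "a\<^sup>2 \<le> (1/10)\<^sup>2"
    using assms by (intro power_mono) auto
  then have "(27/20)\<^sup>2 \<le> 2 - a\<^sup>2"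
    by (simp add: power2_eq_square)
  then have "27/20 \<le> sqrt (2 - a\<^sup>2)"
    by (rule real_le_rsqrt)
  then show ?thesis
    using assms by linarith
qed

lemma small_near_0_if_linear_asymptotics:
  fixes \<alpha> :: "real \<Rightarrow> real"
  assumes "0 < \<omega>0" "\<forall>\<omega>\<in>{0<..<\<omega>0}. \<bar>\<alpha> \<omega> - c * \<omega>\<bar> \<le> C * \<omega>\<^sup>2" "0 < \<epsilon>"
  shows "\<exists>\<omega>1\<in>{0<..\<omega>0}. \<forall>\<omega>\<in>{0<..<\<omega>1}. \<alpha> \<omega> \<le> \<epsilon>"
proof -
  have "\<forall>\<^sub>F \<omega> in at_right 0. norm (\<alpha> \<omega>) \<le> \<bar>c\<bar> * \<omega> + \<bar>C\<bar> * \<omega>\<^sup>2"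
    using eventually_at_right_real[OF assms(1)]
  proof eventually_elim
    case (elim \<omega>)
    then have "\<bar>\<alpha> \<omega> - c * \<omega>\<bar> \<le> C * \<omega>\<^sup>2"
      using assms(2) by auto
    also have "\<dots> \<le> \<bar>C\<bar> * \<omega>\<^sup>2"
      by (intro mult_right_mono) auto
    finally have "\<bar>\<alpha> \<omega> - c * \<omega>\<bar> \<le> \<bar>C\<bar> * \<omega>\<^sup>2" .
    moreover have "\<bar>c * \<omega>\<bar> = \<bar>c\<bar> * \<omega>"
      using elim by (simp add: abs_mult)
    ultimately show ?case
      using abs_triangle_ineq[of "\<alpha> \<omega> - c * \<omega>" "c * \<omega>"] by simp
  qed
  moreover have "((\<lambda>\<omega>. \<bar>c\<bar> * \<omega> + \<bar>C\<bar> * \<omega>\<^sup>2) \<longlongrightarrow> 0) (at_right 0)"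
    by (auto intro!: tendsto_eq_intros)
  ultimately have "(\<alpha> \<longlongrightarrow> 0) (at_right 0)"
    by (rule Lim_null_comparison)
  then have "\<forall>\<^sub>F \<omega> in at_right 0. \<alpha> \<omega> < \<epsilon>"
    using assms(3) by (rule order_tendstoD)
  then obtain b where "0 < b" "\<forall>\<omega>. 0 < \<omega> \<longrightarrow> \<omega> < b \<longrightarrow> \<alpha> \<omega> < \<epsilon>"
    by (auto simp: eventually_at_right_field)
  then show ?thesis
    using assms(1) by (intro bexI[of _ "min b \<omega>0"]) auto
qed

text \<open>The truncated \<open>k - 1\<close> below is harmless: its term carries the factor \<open>k\<close>.\<close>

lemma nderiv_Y1_coeff:
  assumes "smooth_fun K2" "smooth_fun K1"
  shows "nderiv k (Y1_coeff K2 K1) y =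
    - 2 * nderiv k K2 y - (y * nderiv (Suc k) K2 y + k * nderiv k K2 y)
    + 2 * (y * nderiv k K1 y + k * nderiv (k - 1) K1 y)"
proof -
  define g where "g k y = - 2 * nderiv k K2 y - (y * nderiv (Suc k) K2 y + k * nderiv k K2 y)
    + 2 * (y * nderiv k K1 y + k * nderiv (k - 1) K1 y)" for k y
  have "nderiv k (Y1_coeff K2 K1) = g k"
  proof (rule nderiv_eqI)
    show "g 0 = Y1_coeff K2 K1"
      by (simp add: g_def Y1_coeff_def fun_eq_iff nderiv_Suc)
    show "(g j has_real_derivative g (Suc j) x) (at x)" for j x
      unfolding g_def
      by (rule derivative_eq_intros DERIV_nderiv assms refl)+ (cases j, simp_all add: algebra_simps)
  qed
  then show ?thesis
    by (simp add: g_def)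
qed

lemma nderiv_Y0_coeff:
  assumes "smooth_fun K2" "smooth_fun K1" "smooth_fun K0"
  shows "nderiv k (Y0_coeff K2 K1 K0) y =
    (nderiv (Suc (Suc k)) K2 y - nderiv (Suc k) K1 y
      - 2 * (y * nderiv (Suc k) K0 y + k * nderiv k K0 y)) / 2"
proof -
  define g where "g k y = (nderiv (Suc (Suc k)) K2 y - nderiv (Suc k) K1 y
      - 2 * (y * nderiv (Suc k) K0 y + k * nderiv k K0 y)) / 2" for k y
  have "nderiv k (Y0_coeff K2 K1 K0) = g k"
  proof (rule nderiv_eqI)
    show "g 0 = Y0_coeff K2 K1 K0"
      by (simp add: g_def Y0_coeff_def fun_eq_iff nderiv_Suc numeral_2_eq_2)
    show "(g j has_real_derivative g (Suc j) x) (at x)" for j x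
      unfolding g_def
      by (rule derivative_eq_intros DERIV_nderiv assms numeral_neq_zero refl)+
        (simp add: field_simps)
  qed
  then show ?thesis
    by (simp add: g_def)
qed

lemma Y_coeffs_nderiv_bound:
  assumes smooth: "smooth_fun K2" "smooth_fun K1" "smooth_fun K0"
    and A: "\<And>j. 0 \<le> A j" and E: "0 \<le> E"
    and bound: "\<And>j. \<bar>nderiv j K2 y\<bar> \<le> A j * E \<and> \<bar>nderiv j K1 y\<bar> \<le> A j * E \<and> \<bar>nderiv j K0 y\<bar> \<le> A j * E"
  shows "\<bar>nderiv k (Y1_coeff K2 K1) y\<bar> + \<bar>nderiv k (Y0_coeff K2 K1 K0) y\<bar>
    \<le> (7 + 4 * real k) * ((A (k - 1) + A k + A (Suc k) + A (Suc (Suc k))) * ((1 + \<bar>y\<bar>) * E))"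
proof -
  define S where "S = A (k - 1) + A k + A (Suc k) + A (Suc (Suc k))"
  define P where "P = S * ((1 + \<bar>y\<bar>) * E)"
  have estimate: "\<bar>N\<bar> \<le> P \<and> \<bar>y * N\<bar> \<le> P \<and> \<bar>real k * N\<bar> \<le> k * P"
    if N: "\<bar>N\<bar> \<le> A j * E" and j: "j \<in> {k - 1, k, Suc k, Suc (Suc k)}" for N j
  proof -
    have "A j \<le> S"
      using j A by (auto simp: S_def)
    then have "\<bar>N\<bar> \<le> S * E"
      using N E by (meson order_trans mult_right_mono)
    then have "(1 + \<bar>y\<bar>) * \<bar>N\<bar> \<le> (1 + \<bar>y\<bar>) * (S * E)"
      by (intro mult_left_mono) auto
    then have "\<bar>N\<bar> + \<bar>y\<bar> * \<bar>N\<bar> \<le> P"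
      by (simp add: P_def algebra_simps)
    moreover have "0 \<le> \<bar>y\<bar> * \<bar>N\<bar>"
      by simp
    ultimately have "\<bar>N\<bar> \<le> P" "\<bar>y * N\<bar> \<le> P"
      unfolding abs_mult by linarith+
    then show ?thesis
      by (simp add: abs_mult mult_left_mono)
  qed
  have "\<bar>nderiv k (Y1_coeff K2 K1) y\<bar> \<le> (5 + 3 * real k) * P"
    using estimate[OF conjunct1[OF bound], of k] estimate[OF conjunct1[OF bound], of "Suc k"]
      estimate[OF conjunct1[OF conjunct2[OF bound]], of k]
      estimate[OF conjunct1[OF conjunct2[OF bound]], of "k - 1"]
    unfolding nderiv_Y1_coeff[OF smooth(1,2)] by (auto simp: abs_le_iff algebra_simps)
  moreover have "\<bar>nderiv k (Y0_coeff K2 K1 K0) y\<bar> \<le> (2 + real k) * P"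
    using estimate[OF conjunct1[OF bound], of "Suc (Suc k)"]
      estimate[OF conjunct1[OF conjunct2[OF bound]], of "Suc k"]
      estimate[OF conjunct2[OF conjunct2[OF bound]], of "Suc k"]
      estimate[OF conjunct2[OF conjunct2[OF bound]], of k]
    unfolding nderiv_Y0_coeff[OF smooth] by (auto simp: abs_le_iff algebra_simps)
  ultimately show ?thesis
    by (simp add: P_def S_def algebra_simps)
qed

lemma Y_coeffs_exp_decay:
  assumes smooth: "smooth_fun K2" "smooth_fun K1" "smooth_fun K0"
    and \<omega>: "0 \<le> \<omega>" and t: "5/4 \<le> t"
    and bound: "\<And>j y. \<bar>nderiv j K2 y\<bar> \<le> A j * \<omega> * exp (- t * \<bar>y\<bar>)
      \<and> \<bar>nderiv j K1 y\<bar> \<le> A j * \<omega> * exp (- t * \<bar>y\<bar>)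
      \<and> \<bar>nderiv j K0 y\<bar> \<le> A j * \<omega> * exp (- t * \<bar>y\<bar>)"
  shows "\<bar>nderiv k (Y1_coeff K2 K1) y\<bar> + \<bar>nderiv k (Y0_coeff K2 K1 K0) y\<bar>
    \<le> 5 * (7 + 4 * real k) * (\<bar>A (k - 1)\<bar> + \<bar>A k\<bar> + \<bar>A (Suc k)\<bar> + \<bar>A (Suc (Suc k))\<bar>)
       * \<omega> * exp (- \<bar>y\<bar>)"
proof -
  define S where "S = \<bar>A (k - 1)\<bar> + \<bar>A k\<bar> + \<bar>A (Suc k)\<bar> + \<bar>A (Suc (Suc k))\<bar>"
  define E where "E = \<omega> * exp (- t * \<bar>y\<bar>)"
  have "A j * \<omega> * exp (- t * \<bar>y\<bar>) \<le> \<bar>A j\<bar> * E" for j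
    unfolding E_def mult.assoc using \<omega> by (intro mult_right_mono) auto
  with bound have "\<bar>nderiv j K2 y\<bar> \<le> \<bar>A j\<bar> * E \<and> \<bar>nderiv j K1 y\<bar> \<le> \<bar>A j\<bar> * E
      \<and> \<bar>nderiv j K0 y\<bar> \<le> \<bar>A j\<bar> * E" for j
    by (meson order_trans)
  then have "\<bar>nderiv k (Y1_coeff K2 K1) y\<bar> + \<bar>nderiv k (Y0_coeff K2 K1 K0) y\<bar>
      \<le> (7 + 4 * real k) * (S * ((1 + \<bar>y\<bar>) * E))"
    unfolding S_def using \<omega> by (intro Y_coeffs_nderiv_bound smooth) (auto simp: E_def)
  also have "\<dots> \<le> (7 + 4 * real k) * (S * (5 * \<omega> * exp (- \<bar>y\<bar>)))"
  proof -
    have "(1 + \<bar>y\<bar>) * exp (- t * \<bar>y\<bar>) \<le> t / (t - 1) * exp (- \<bar>y\<bar>)"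
      using t by (intro one_plus_abs_mult_exp_le) simp
    also have "\<dots> \<le> 5 * exp (- \<bar>y\<bar>)"
      using t by (intro mult_right_mono) (simp_all add: field_simps)
    finally have "\<omega> * ((1 + \<bar>y\<bar>) * exp (- t * \<bar>y\<bar>)) \<le> \<omega> * (5 * exp (- \<bar>y\<bar>))"
      using \<omega> by (rule mult_left_mono)
    then have "(1 + \<bar>y\<bar>) * E \<le> 5 * \<omega> * exp (- \<bar>y\<bar>)"
      by (simp add: E_def algebra_simps)
    then show ?thesis
      by (intro mult_left_mono) (auto simp: S_def)
  qed
  finally show ?thesis
    by (simp add: S_def algebra_simps)
qed

lemma polynomially_bounded_nderiv_if_exp_bound:
  assumes "smooth_fun f" "0 \<le> t" "\<And>y. \<bar>nderiv k f y\<bar> \<le> C * exp (- t * \<bar>y\<bar>)"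
  shows "polynomially_bounded (nderiv k f)"
proof (rule polynomially_boundedI[OF continuous_on_nderiv[OF assms(1)]])
  fix y
  have "C * exp (- t * \<bar>y\<bar>) \<le> \<bar>C\<bar> * 1"
    using assms(2) by (intro mult_mono) (auto simp: mult_nonneg_nonneg)
  then show "\<bar>nderiv k f y\<bar> \<le> \<bar>C\<bar>"
    using assms(3)[of y] by simp
qed

lemma K_op_energy_identity_if_exp_bound:
  assumes h: "schwartz h" and smooth: "smooth_fun K2" "smooth_fun K1" "smooth_fun K0"
    and t: "0 \<le> t"
    and bound: "\<And>j y. \<bar>nderiv j K2 y\<bar> \<le> A j * exp (- t * \<bar>y\<bar>)
      \<and> \<bar>nderiv j K1 y\<bar> \<le> A j * exp (- t * \<bar>y\<bar>)
      \<and> \<bar>nderiv j K0 y\<bar> \<le> A j * exp (- t * \<bar>y\<bar>)"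
  shows "(\<integral>y. (2 * y * deriv h y + h y) * K_op K2 K1 K0 h y \<partial>lborel)
     = 4 * (\<integral>y. (nderiv 2 h y)\<^sup>2 \<partial>lborel) + 4 * (\<integral>y. (deriv h y)\<^sup>2 \<partial>lborel)
       + (\<integral>y. Y1_coeff K2 K1 y * (deriv h y)\<^sup>2 \<partial>lborel)
       + (\<integral>y. Y0_coeff K2 K1 K0 y * (h y)\<^sup>2 \<partial>lborel)"
proof (rule K_op_energy_identity[OF h smooth])
  show "polynomially_bounded (nderiv k K2)" "polynomially_bounded (nderiv k K1)"
    "polynomially_bounded (nderiv k K0)" for k
    using bound[of k]
    by (intro polynomially_bounded_nderiv_if_exp_bound[OF smooth(1) t]
        polynomially_bounded_nderiv_if_exp_bound[OF smooth(2) t]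
        polynomially_bounded_nderiv_if_exp_bound[OF smooth(3) t]; blast)+
qed

theorem lemma4:
  fixes \<omega>0 :: real
    and \<alpha> :: "real \<Rightarrow> real"
    and W1 W2 K2 K1 K0 :: "real \<Rightarrow> real \<Rightarrow> real"
  assumes om0: "\<omega>0 > 0"
    and alpha_pos: "\<forall>\<omega>\<in>{0<..<\<omega>0}. \<alpha> \<omega> > 0"
    and alpha_smooth: "\<forall>k. \<forall>\<omega>\<in>{0<..<\<omega>0}. nderiv k \<alpha> differentiable (at \<omega>)"
    and alpha_asym: "\<exists>C. \<forall>\<omega>\<in>{0<..<\<omega>0}. \<bar>\<alpha> \<omega> - 8/9 * \<omega>\<bar> \<le> C * \<omega>\<^sup>2"
    and W_smooth: "\<forall>\<omega>\<in>{0<..<\<omega>0}. smooth_fun (W1 \<omega>) \<and> smooth_fun (W2 \<omega>)"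
    and W_even: "\<forall>\<omega>\<in>{0<..<\<omega>0}. \<forall>y. W1 \<omega> (-y) = W1 \<omega> y \<and> W2 \<omega> (-y) = W2 \<omega> y"
    and W_eq1: "\<forall>\<omega>\<in>{0<..<\<omega>0}. \<forall>y.
                  M_plus \<omega> (W1 \<omega>) y = (1 - (\<alpha> \<omega>)\<^sup>2) * W2 \<omega> y"
    and W_eq2: "\<forall>\<omega>\<in>{0<..<\<omega>0}. \<forall>y.
                  M_minus \<omega> (W2 \<omega>) y = (1 - (\<alpha> \<omega>)\<^sup>2) * W1 \<omega> y"
    and W_bd: "\<forall>k. \<exists>C. \<forall>\<omega>\<in>{0<..<\<omega>0}. \<forall>y.
                  \<bar>nderiv k (W1 \<omega>) y\<bar> \<le> C * (\<omega> ^ k * exp (- \<alpha> \<omega> * \<bar>y\<bar>) + \<omega> * exp (- \<bar>y\<bar>)) \<and>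
                  \<bar>nderiv k (W2 \<omega>) y\<bar> \<le> C * (\<omega> ^ k * exp (- \<alpha> \<omega> * \<bar>y\<bar>) + \<omega> * exp (- \<bar>y\<bar>))"
    and W_diff_bd: "\<forall>k. \<exists>C. \<forall>\<omega>\<in>{0<..<\<omega>0}. \<forall>y.
                  \<bar>nderiv k (\<lambda>y. W1 \<omega> y - W2 \<omega> y) y\<bar>
                    \<le> C * \<omega> * exp (- sqrt (2 - (\<alpha> \<omega>)\<^sup>2) * \<bar>y\<bar>)"
    and W_exp_bd: "\<exists>C. \<forall>\<omega>\<in>{0<..<\<omega>0}. \<forall>y.
                  \<bar>W1 \<omega> y - exp (- \<alpha> \<omega> * \<bar>y\<bar>)\<bar> \<le> C * \<omega> * exp (- \<alpha> \<omega> * \<bar>y\<bar>) \<and>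
                  \<bar>W2 \<omega> y - exp (- \<alpha> \<omega> * \<bar>y\<bar>)\<bar> \<le> C * \<omega> * exp (- \<alpha> \<omega> * \<bar>y\<bar>)"
    and K_smooth: "\<forall>\<omega>\<in>{0<..<\<omega>0}.
                  smooth_fun (K2 \<omega>) \<and> smooth_fun (K1 \<omega>) \<and> smooth_fun (K0 \<omega>)"
    and K_intertwine: "\<forall>\<omega>\<in>{0<..<\<omega>0}. \<forall>f. smooth_fun f \<longrightarrow>
                  U_op (W2 \<omega>) (M_plus \<omega> (M_minus \<omega> f))
                    = K_op (K2 \<omega>) (K1 \<omega>) (K0 \<omega>) (U_op (W2 \<omega>) f)"
    and K_bd: "\<forall>k. \<exists>C. \<forall>\<omega>\<in>{0<..<\<omega>0}. \<forall>y.
                  \<bar>nderiv k (K2 \<omega>) y\<bar> \<le> C * \<omega> * exp (- (sqrt (2 - (\<alpha> \<omega>)\<^sup>2) - \<alpha> \<omega>) * \<bar>y\<bar>) \<and>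
                  \<bar>nderiv k (K1 \<omega>) y\<bar> \<le> C * \<omega> * exp (- (sqrt (2 - (\<alpha> \<omega>)\<^sup>2) - \<alpha> \<omega>) * \<bar>y\<bar>) \<and>
                  \<bar>nderiv k (K0 \<omega>) y\<bar> \<le> C * \<omega> * exp (- (sqrt (2 - (\<alpha> \<omega>)\<^sup>2) - \<alpha> \<omega>) * \<bar>y\<bar>)"
  defines "Y1 \<equiv> \<lambda>\<omega> y. - 2 * K2 \<omega> y - y * deriv (K2 \<omega>) y + 2 * y * K1 \<omega> y"
    and "Y0 \<equiv> \<lambda>\<omega> y. (nderiv 2 (K2 \<omega>) y - deriv (K1 \<omega>) y - 2 * y * deriv (K0 \<omega>) y) / 2"
  shows "\<exists>\<omega>1>0. (\<forall>\<omega>\<in>{0<..<\<omega>1}. \<forall>h. schwartz h \<longrightarrow>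
            (\<integral>y. (2 * y * deriv h y + h y) * K_op (K2 \<omega>) (K1 \<omega>) (K0 \<omega>) h y \<partial>lborel)
              = 4 * (\<integral>y. (nderiv 2 h y)\<^sup>2 \<partial>lborel) + 4 * (\<integral>y. (deriv h y)\<^sup>2 \<partial>lborel)
                + (\<integral>y. Y1 \<omega> y * (deriv h y)\<^sup>2 \<partial>lborel) + (\<integral>y. Y0 \<omega> y * (h y)\<^sup>2 \<partial>lborel))
         \<and> (\<forall>k. \<exists>C. \<forall>\<omega>\<in>{0<..<\<omega>1}. \<forall>y.
              \<bar>nderiv k (Y1 \<omega>) y\<bar> + \<bar>nderiv k (Y0 \<omega>) y\<bar> \<le> C * \<omega> * exp (- \<bar>y\<bar>))"
proof -
  define t where "t \<omega> = sqrt (2 - (\<alpha> \<omega>)\<^sup>2) - \<alpha> \<omega>" for \<omega>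
  obtain A where A: "\<And>k \<omega> y. \<omega> \<in> {0<..<\<omega>0} \<Longrightarrow>
      \<bar>nderiv k (K2 \<omega>) y\<bar> \<le> A k * \<omega> * exp (- t \<omega> * \<bar>y\<bar>) \<and>
      \<bar>nderiv k (K1 \<omega>) y\<bar> \<le> A k * \<omega> * exp (- t \<omega> * \<bar>y\<bar>) \<and>
      \<bar>nderiv k (K0 \<omega>) y\<bar> \<le> A k * \<omega> * exp (- t \<omega> * \<bar>y\<bar>)"
    using K_bd unfolding t_def by metis
  obtain Ca where "\<forall>\<omega>\<in>{0<..<\<omega>0}. \<bar>\<alpha> \<omega> - 8/9 * \<omega>\<bar> \<le> Ca * \<omega>\<^sup>2"
    using alpha_asym by blast
  from small_near_0_if_linear_asymptotics[OF om0 this, of "1/10"]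
  obtain \<omega>1 where \<omega>1: "0 < \<omega>1" "\<omega>1 \<le> \<omega>0" "\<forall>\<omega>\<in>{0<..<\<omega>1}. \<alpha> \<omega> \<le> 1/10"
    by auto
  have \<omega>0: "\<omega> \<in> {0<..<\<omega>0}" and smooth: "smooth_fun (K2 \<omega>)" "smooth_fun (K1 \<omega>)" "smooth_fun (K0 \<omega>)"
    and gap: "5/4 \<le> t \<omega>" if "\<omega> \<in> {0<..<\<omega>1}" for \<omega>
  proof -
    show \<omega>0: "\<omega> \<in> {0<..<\<omega>0}"
      using that \<omega>1(2) by auto
    then show "smooth_fun (K2 \<omega>)" "smooth_fun (K1 \<omega>)" "smooth_fun (K0 \<omega>)"
      using K_smooth by auto
    show "5/4 \<le> t \<omega>"
      unfolding t_def using alpha_pos \<omega>0 \<omega>1(3) that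
      by (intro sqrt_two_minus_square_minus_ge) (auto intro: less_imp_le)
  qed
  have Y: "Y1 \<omega> = Y1_coeff (K2 \<omega>) (K1 \<omega>)" "Y0 \<omega> = Y0_coeff (K2 \<omega>) (K1 \<omega>) (K0 \<omega>)" for \<omega>
    by (simp_all add: Y1_def Y0_def Y1_coeff_def [abs_def] Y0_coeff_def [abs_def])
  have identity: "(\<integral>y. (2 * y * deriv h y + h y) * K_op (K2 \<omega>) (K1 \<omega>) (K0 \<omega>) h y \<partial>lborel)
      = 4 * (\<integral>y. (nderiv 2 h y)\<^sup>2 \<partial>lborel) + 4 * (\<integral>y. (deriv h y)\<^sup>2 \<partial>lborel)
        + (\<integral>y. Y1 \<omega> y * (deriv h y)\<^sup>2 \<partial>lborel) + (\<integral>y. Y0 \<omega> y * (h y)\<^sup>2 \<partial>lborel)"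
    if "\<omega> \<in> {0<..<\<omega>1}" "schwartz h" for \<omega> h
    unfolding Y using gap[OF that(1)] A[OF \<omega>0[OF that(1)]]
    by (intro K_op_energy_identity_if_exp_bound[OF that(2) smooth[OF that(1)],
          where t = "t \<omega>" and A = "\<lambda>j. A j * \<omega>"]) auto
  have decay: "\<bar>nderiv k (Y1 \<omega>) y\<bar> + \<bar>nderiv k (Y0 \<omega>) y\<bar>
      \<le> 5 * (7 + 4 * real k) * (\<bar>A (k - 1)\<bar> + \<bar>A k\<bar> + \<bar>A (Suc k)\<bar> + \<bar>A (Suc (Suc k))\<bar>)
        * \<omega> * exp (- \<bar>y\<bar>)"
    if "\<omega> \<in> {0<..<\<omega>1}" for \<omega> k y
    unfolding Y using that A[OF \<omega>0[OF that]]
    by (intro Y_coeffs_exp_decay[OF smooth[OF that] _ gap[OF that]]) auto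
  show ?thesis
    by (rule exI[of _ \<omega>1]) (use \<omega>1(1) identity decay in blast)
qed

end
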